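(* Let $S>0$, let $D$ be a finite multiset of items with sizes in $(0,S]$, let $k\ge1$ be an integer and $\epsilon\in(0,1/2]$. Consider the following algorithm. (1) Let $I$ be the items of $D$ of size at most $\epsilon S$ and $J$ the items of size larger than $\epsilon S$. (2) Sort $J$ in non-decreasing order of size and partition it into consecutive groups of $g=\max\{1,\lfloor n(J)\epsilon^2\rfloor\}$ items (the last group possibly smaller), where $n(J)$ is the number of items of $J$; let $U$ be the instance obtained by rounding the size of every item up to the maximum size in its group. (3) Compute an optimal $k$-times bin packing of $U$ (i.e. of $U_k$), e.g. by optimally solving its configuration integer program. (4) Replace every copy of a rounded item by the corresponding copy of its original item, obtaining a $k$-times bin packing of $J$. (5) Insert the $k$ copies of each item of $I$ one at a time, each into some existing bin in which it fits (total size at most $S$) and which contains no copy of the same item, opening a new bin only if no such bin exists. Then the number $bins(D_k)$ of bins produced satisfies $$bins(D_k)\le(1+2\epsilon)\,OPT(D_k)+k.$$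
   Context: For a multiset $D$ of items with sizes in $(0,S]$ and an integer $k\ge1$, $D_k$ denotes the collection of $k$ copies of each item of $D$. A $k$-times bin packing of $D$ is an assignment of all copies in $D_k$ to bins such that each bin has total size at most $S$ and no bin contains two copies of the same item; $OPT(D_k)$ is the minimum number of bins in such a packing. *)

theory Defs
  imports Complex_Main
begin

text \<open>Items of the instance D are indexed by a finite set of naturals (a multiset is
  an indexed family of sizes w). A copy of item i is a pair (i, j) with j < k.
  An assignment f maps copies to bin labels (naturals).\<close>

definition copies :: "nat set \<Rightarrow> nat \<Rightarrow> (nat \<times> nat) set" where
  "copies X k = X \<times> {..<k}"

definition load :: "(nat \<Rightarrow> real) \<Rightarrow> (nat \<times> nat \<Rightarrow> nat) \<Rightarrow> (nat \<times> nat) set \<Rightarrow> nat \<Rightarrow> real" where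
  "load w f A b = (\<Sum>c\<in>{c\<in>A. f c = b}. w (fst c))"

definition valid_packing :: "real \<Rightarrow> (nat \<Rightarrow> real) \<Rightarrow> (nat \<times> nat) set \<Rightarrow> (nat \<times> nat \<Rightarrow> nat) \<Rightarrow> bool" where
  "valid_packing S w A f \<longleftrightarrow>
     (\<forall>b. load w f A b \<le> S) \<and>
     (\<forall>c\<in>A. \<forall>c'\<in>A. f c = f c' \<and> fst c = fst c' \<longrightarrow> c = c')"

definition num_bins :: "(nat \<times> nat \<Rightarrow> nat) \<Rightarrow> (nat \<times> nat) set \<Rightarrow> nat" where
  "num_bins f A = card (f ` A)"

definition OPT :: "real \<Rightarrow> (nat \<Rightarrow> real) \<Rightarrow> nat set \<Rightarrow> nat \<Rightarrow> nat" where
  "OPT S w X k = (LEAST m. \<exists>f. valid_packing S w (copies X k) f \<and> num_bins f (copies X k) = m)"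

text \<open>Linear grouping: sigma enumerates the m large items in non-decreasing order of
  size (positions 0..m-1); positions are grouped into consecutive blocks of g; the
  rounded size of an item is the maximum size in its group.\<close>
definition rounded_size :: "(nat \<Rightarrow> real) \<Rightarrow> (nat \<Rightarrow> nat) \<Rightarrow> nat \<Rightarrow> nat \<Rightarrow> nat \<Rightarrow> real" where
  "rounded_size d \<sigma> m g i =
     Max ((\<lambda>q. d (\<sigma> q)) ` {q. q < m \<and> q div g = the_inv_into {..<m} \<sigma> i div g})"

definition copy_order :: "nat list \<Rightarrow> nat \<Rightarrow> (nat \<times> nat) list" where
  "copy_order xs k = concat (map (\<lambda>i. map (\<lambda>j. (i, j)) [0..<k]) xs)"

end

theory Submission
  imports Defs "HOL-Library.Nat_Bijection"
begin

(* Moving every rounded item g positions up in the sorted order puts it where an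
   optimal packing of D_k has an original item at least as large, so only the copies of the
   last g positions need new bins: OPT(U_k) <= OPT(D_k) + g k. As each of the m large items has
   size > eps S, the total size gives k m eps <= OPT(D_k), hence g k <= k + eps OPT(D_k).

   If no copy of a small item opens a bin, the packing uses OPT(U_k) bins.
   Otherwise consider the last copy that does: at that moment every bin except the at most
   k - 1 holding another copy of the same item is filled beyond (1 - eps) S, so
   (bins - k) (1 - eps) S <= k (total size) <= S OPT(D_k), and 1/(1 - eps) <= 1 + 2 eps. *)

lemma finite_copies: "finite X \<Longrightarrow> finite (copies X k)"
  unfolding copies_def by simp

lemma copies_mono: "X \<subseteq> Y \<Longrightarrow> copies X k \<subseteq> copies Y k"
  unfolding copies_def by auto

lemma set_copy_order: "set (copy_order xs k) = copies (set xs) k"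
  unfolding copy_order_def copies_def by auto

lemma distinct_copy_order: "distinct xs \<Longrightarrow> distinct (copy_order xs k)"
  unfolding copy_order_def by (induction xs) (auto simp: distinct_map inj_on_def)

lemma sum_copies: "(\<Sum>c\<in>copies X k. w (fst c)) = real k * (\<Sum>i\<in>X. w i)"
proof -
  have "(\<Sum>c\<in>X \<times> {..<k}. w (fst c)) = (\<Sum>(x, y)\<in>X \<times> {..<k}. w x)"
    by (simp add: case_prod_beta')
  also have "\<dots> = (\<Sum>x\<in>X. \<Sum>y<k. w x)" by (rule sum.cartesian_product[symmetric])
  also have "\<dots> = real k * (\<Sum>i\<in>X. w i)" by (simp add: sum_distrib_left)
  finally show ?thesis unfolding copies_def .
qed

lemma sum_load: "finite A \<Longrightarrow> (\<Sum>b\<in>f ` A. load w f A b) = (\<Sum>c\<in>A. w (fst c))"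
  unfolding load_def by (rule sum.image_gen[symmetric])

lemma load_nonneg: "\<forall>c\<in>A. 0 \<le> w (fst c) \<Longrightarrow> 0 \<le> load w f A b"
  unfolding load_def by (intro sum_nonneg) auto

lemma load_eq_0: "b \<notin> f ` A \<Longrightarrow> load w f A b = 0"
  unfolding load_def by (metis (mono_tags, lifting) empty_Collect_eq image_eqI sum.empty)

lemma sum_le_num_bins:
  assumes "valid_packing S w A f" "finite A"
  shows "(\<Sum>c\<in>A. w (fst c)) \<le> S * real (num_bins f A)"
proof -
  have "(\<Sum>c\<in>A. w (fst c)) = (\<Sum>b\<in>f ` A. load w f A b)"
    using sum_load[OF assms(2)] by simp
  also have "\<dots> \<le> real (card (f ` A)) * S"
    by (rule sum_bounded_above) (use assms(1) in \<open>auto simp: valid_packing_def\<close>)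
  finally show ?thesis by (simp add: num_bins_def mult.commute)
qed

lemma valid_packing_inj:
  assumes "inj_on f A" "\<forall>c\<in>A. w (fst c) \<le> S" "0 \<le> S"
  shows "valid_packing S w A f"
  unfolding valid_packing_def
proof (intro conjI allI ballI impI)
  fix b
  show "load w f A b \<le> S"
  proof (cases "b \<in> f ` A")
    case True
    then obtain c where c: "c \<in> A" "b = f c" by auto
    with assms(1) have "{c'\<in>A. f c' = b} = {c}" by (auto dest: inj_onD)
    then show ?thesis using assms(2) c by (simp add: load_def)
  qed (simp add: load_eq_0 assms(3))
qed (use assms(1) in \<open>auto dest: inj_onD\<close>)

lemma valid_packing_reindex:
  assumes h: "valid_packing S w' B h" and "finite B" and w'_nonneg: "\<forall>c\<in>B. 0 \<le> w' (fst c)"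
    and \<phi>: "inj_on \<phi> A" "\<phi> ` A \<subseteq> B"
    and dominated: "\<forall>c\<in>A. w (fst c) \<le> w' (fst (\<phi> c))"
    and same_item: "\<forall>c\<in>A. \<forall>c'\<in>A. fst c = fst c' \<longrightarrow> fst (\<phi> c) = fst (\<phi> c')"
  shows "valid_packing S w A (h \<circ> \<phi>)"
  unfolding valid_packing_def
proof (intro conjI allI ballI impI)
  fix b
  let ?Ab = "{c\<in>A. h (\<phi> c) = b}"
  have "load w (h \<circ> \<phi>) A b \<le> (\<Sum>c\<in>?Ab. w' (fst (\<phi> c)))"
    unfolding load_def comp_def by (rule sum_mono) (use dominated in auto)
  also have "\<dots> = (\<Sum>x\<in>\<phi> ` ?Ab. w' (fst x))"
    by (rule sum.reindex[symmetric, unfolded comp_def]) (rule inj_on_subset[OF \<phi>(1)], auto)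
  also have "\<dots> \<le> load w' h B b"
    unfolding load_def by (rule sum_mono2) (use \<open>finite B\<close> \<phi>(2) w'_nonneg in auto)
  also have "\<dots> \<le> S" using h by (simp add: valid_packing_def)
  finally show "load w (h \<circ> \<phi>) A b \<le> S" .
next
  fix c c' assume c: "c \<in> A" "c' \<in> A" "(h \<circ> \<phi>) c = (h \<circ> \<phi>) c' \<and> fst c = fst c'"
  have "\<phi> c \<in> B" "\<phi> c' \<in> B" using \<phi>(2) c by auto
  moreover have "h (\<phi> c) = h (\<phi> c')" using c(3) by simp
  moreover have "fst (\<phi> c) = fst (\<phi> c')" using same_item c by blast
  ultimately have "\<phi> c = \<phi> c'" using h unfolding valid_packing_def by simp
  with \<phi>(1) c show "c = c'" by (auto dest: inj_onD)
qed

lemma valid_packing_Un: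
  assumes f1: "valid_packing S w A1 f1" and f2: "valid_packing S w A2 f2"
    and "finite A1" "finite A2" "A1 \<inter> A2 = {}" and disjoint_bins: "f1 ` A1 \<inter> f2 ` A2 = {}"
  shows "valid_packing S w (A1 \<union> A2) (\<lambda>c. if c \<in> A1 then f1 c else f2 c)"
    (is "valid_packing S w _ ?f")
  unfolding valid_packing_def
proof (intro conjI allI ballI impI)
  fix b
  have "{c\<in>A1 \<union> A2. ?f c = b} = {c\<in>A1. f1 c = b} \<union> {c\<in>A2. f2 c = b}"
    using assms(5) by auto
  then have "load w ?f (A1 \<union> A2) b = (\<Sum>c\<in>{c\<in>A1. f1 c = b} \<union> {c\<in>A2. f2 c = b}. w (fst c))"
    unfolding load_def by simp
  also have "\<dots> = load w f1 A1 b + load w f2 A2 b"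
    unfolding load_def by (rule sum.union_disjoint) (use assms(3-5) in auto)
  finally have "load w ?f (A1 \<union> A2) b = load w f1 A1 b + load w f2 A2 b" .
  moreover have "b \<notin> f1 ` A1 \<or> b \<notin> f2 ` A2" using disjoint_bins by blast
  ultimately show "load w ?f (A1 \<union> A2) b \<le> S"
    using f1 f2 by (auto simp: valid_packing_def load_eq_0)
next
  fix c c' assume c: "c \<in> A1 \<union> A2" "c' \<in> A1 \<union> A2" "?f c = ?f c' \<and> fst c = fst c'"
  have "c \<in> A1 \<longleftrightarrow> c' \<in> A1"
    using c disjoint_bins by (auto split: if_splits)
  then show "c = c'"
    using c f1 f2 unfolding valid_packing_def by (metis Un_iff)
qed

lemma valid_packing_add_singletons:
  assumes f: "valid_packing S w A f" and "finite A" "finite B" "A \<inter> B = {}"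
    and "0 \<le> S" "\<forall>c\<in>B. w (fst c) \<le> S"
  obtains f' where "valid_packing S w (A \<union> B) f'" "num_bins f' (A \<union> B) \<le> num_bins f A + card B"
proof -
  define e where "e c = Suc (Max (f ` A)) + prod_encode c" for c
  have "valid_packing S w B e"
    by (rule valid_packing_inj) (use assms(5,6) in \<open>simp_all add: e_def inj_on_def prod_encode_eq\<close>)
  moreover have "f a < e c" if "a \<in> A" for a c
  proof -
    have "f a \<le> Max (f ` A)" using \<open>finite A\<close> that by simp
    then show ?thesis unfolding e_def by simp
  qed
  then have "f ` A \<inter> e ` B = {}" by (auto simp: less_not_refl3)
  ultimately have valid: "valid_packing S w (A \<union> B) (\<lambda>c. if c \<in> A then f c else e c)"
    using valid_packing_Un[OF f] assms(2-4) by blast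
  have "(\<lambda>c. if c \<in> A then f c else e c) ` (A \<union> B) \<subseteq> f ` A \<union> e ` B" by auto
  then have "card ((\<lambda>c. if c \<in> A then f c else e c) ` (A \<union> B)) \<le> card (f ` A \<union> e ` B)"
    using assms(2,3) by (intro card_mono) auto
  also have "\<dots> \<le> card (f ` A) + card (e ` B)" by (rule card_Un_le)
  also have "\<dots> \<le> card (f ` A) + card B" using card_image_le[OF \<open>finite B\<close>, of e] by simp
  finally show ?thesis using that valid unfolding num_bins_def by blast
qed

lemma exists_valid_packing:
  "0 \<le> S \<Longrightarrow> \<forall>i\<in>X. w i \<le> S \<Longrightarrow> \<exists>f. valid_packing S w (copies X k) f"
  by (rule exI, rule valid_packing_inj[OF inj_prod_encode[THEN inj_on_subset]])
    (auto simp: copies_def)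

lemma OPT_le: "valid_packing S w (copies X k) f \<Longrightarrow> OPT S w X k \<le> num_bins f (copies X k)"
  unfolding OPT_def by (rule Least_le) blast

lemma OPT_attained:
  assumes "\<exists>f. valid_packing S w (copies X k) f"
  obtains f where "valid_packing S w (copies X k) f" "num_bins f (copies X k) = OPT S w X k"
  using LeastI_ex[of "\<lambda>m. \<exists>f. valid_packing S w (copies X k) f \<and> num_bins f (copies X k) = m"]
    assms that unfolding OPT_def by blast

lemma sum_le_OPT:
  assumes "finite X" "\<exists>f. valid_packing S w (copies X k) f"
  shows "real k * (\<Sum>i\<in>X. w i) \<le> S * real (OPT S w X k)"
proof -
  obtain f where "valid_packing S w (copies X k) f" "num_bins f (copies X k) = OPT S w X k"
    using OPT_attained[OF assms(2)] .
  then show ?thesis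
    using sum_le_num_bins[OF _ finite_copies] sum_copies assms(1) by metis
qed

lemma card_mult_le_OPT:
  assumes "finite X" "J \<subseteq> X" "\<forall>i\<in>X. 0 \<le> w i" "\<forall>i\<in>J. T \<le> w i"
    and "\<exists>f. valid_packing S w (copies X k) f"
  shows "real k * (real (card J) * T) \<le> S * real (OPT S w X k)"
proof -
  have "real (card J) * T \<le> (\<Sum>i\<in>J. w i)" using assms(4) by (intro sum_bounded_below) auto
  also have "\<dots> \<le> (\<Sum>i\<in>X. w i)" by (rule sum_mono2) (use assms(1-3) in auto)
  finally have "real k * (real (card J) * T) \<le> real k * (\<Sum>i\<in>X. w i)"
    by (rule mult_left_mono) simp
  also have "\<dots> \<le> S * real (OPT S w X k)" using assms(1,5) by (rule sum_le_OPT)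
  finally show ?thesis .
qed

lemma OPT_mono:
  assumes "X \<subseteq> Y" "finite Y" "\<forall>i\<in>Y. 0 \<le> w i" "\<exists>f. valid_packing S w (copies Y k) f"
  shows "OPT S w X k \<le> OPT S w Y k"
proof -
  obtain h where h: "valid_packing S w (copies Y k) h" "num_bins h (copies Y k) = OPT S w Y k"
    using OPT_attained[OF assms(4)] .
  have sub: "copies X k \<subseteq> copies Y k" using assms(1) by (rule copies_mono)
  have "valid_packing S w (copies X k) (h \<circ> id)"
    by (rule valid_packing_reindex[OF h(1)]) (use assms sub in \<open>auto simp: finite_copies copies_def\<close>)
  then have "OPT S w X k \<le> num_bins h (copies X k)" using OPT_le by simp
  also have "\<dots> \<le> num_bins h (copies Y k)"
    unfolding num_bins_def by (intro card_mono finite_imageI finite_copies assms(2) image_mono sub)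
  finally show ?thesis using h(2) by simp
qed

lemma less_add_if_div_eq: "0 < (g::nat) \<Longrightarrow> q' div g = q div g \<Longrightarrow> q' < q + g"
  by (metis add.commute div_mult_mod_eq mod_less_divisor add_less_le_mono div_times_less_eq_dividend)

lemma bij_betw_the_inv_into_lessThan:
  assumes "bij_betw \<sigma> {..<m} J" "i \<in> J"
  shows "the_inv_into {..<m} \<sigma> i < m" "\<sigma> (the_inv_into {..<m} \<sigma> i) = i"
proof -
  show "the_inv_into {..<m} \<sigma> i < m"
    using assms by (metis bij_betw_the_inv_into bij_betw_apply lessThan_iff)
  show "\<sigma> (the_inv_into {..<m} \<sigma> i) = i"
    using assms by (meson f_the_inv_into_f_bij_betw)
qed

lemma rounded_size_le_shifted:
  assumes \<sigma>: "bij_betw \<sigma> {..<m} J" and mono: "\<forall>p q. p \<le> q \<and> q < m \<longrightarrow> d (\<sigma> p) \<le> d (\<sigma> q)"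
    and "0 < g" "i \<in> J" and shifted: "the_inv_into {..<m} \<sigma> i + g < m"
  shows "rounded_size d \<sigma> m g i \<le> d (\<sigma> (the_inv_into {..<m} \<sigma> i + g))"
  unfolding rounded_size_def
proof (rule Max.boundedI)
  fix x assume "x \<in> (\<lambda>q. d (\<sigma> q)) ` {q. q < m \<and> q div g = the_inv_into {..<m} \<sigma> i div g}"
  then obtain q where "x = d (\<sigma> q)" "q div g = the_inv_into {..<m} \<sigma> i div g" by auto
  with \<open>0 < g\<close> mono shifted show "x \<le> d (\<sigma> (the_inv_into {..<m} \<sigma> i + g))"
    by (simp add: less_add_if_div_eq less_imp_le)
next
  have "the_inv_into {..<m} \<sigma> i \<in> {q. q < m \<and> q div g = the_inv_into {..<m} \<sigma> i div g}"
    using shifted by simp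
  then show "(\<lambda>q. d (\<sigma> q)) ` {q. q < m \<and> q div g = the_inv_into {..<m} \<sigma> i div g} \<noteq> {}"
    by blast
qed simp

lemma rounded_size_le:
  assumes \<sigma>: "bij_betw \<sigma> {..<m} J" and "\<forall>i\<in>J. d i \<le> S" "i \<in> J"
  shows "rounded_size d \<sigma> m g i \<le> S"
  unfolding rounded_size_def
proof (rule Max.boundedI)
  show "(\<lambda>q. d (\<sigma> q)) ` {q. q < m \<and> q div g = the_inv_into {..<m} \<sigma> i div g} \<noteq> {}"
    using bij_betw_the_inv_into_lessThan(1)[OF assms(1,3)] by auto
qed (use assms bij_betw_apply[OF \<sigma>] in auto)

lemma card_last_groups:
  assumes \<sigma>: "bij_betw \<sigma> {..<m} J"
  shows "card {c \<in> copies J k. m \<le> the_inv_into {..<m} \<sigma> (fst c) + g} \<le> g * k"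
proof -
  have "{c \<in> copies J k. m \<le> the_inv_into {..<m} \<sigma> (fst c) + g}
      \<subseteq> (\<lambda>(q, j). (\<sigma> q, j)) ` ({m - g..<m} \<times> {..<k})"
  proof
    fix c assume c: "c \<in> {c \<in> copies J k. m \<le> the_inv_into {..<m} \<sigma> (fst c) + g}"
    then have "fst c \<in> J" "snd c < k" by (auto simp: copies_def)
    with c bij_betw_the_inv_into_lessThan[OF \<sigma>, of "fst c"]
    show "c \<in> (\<lambda>(q, j). (\<sigma> q, j)) ` ({m - g..<m} \<times> {..<k})"
      by (auto intro!: image_eqI[of _ _ "(the_inv_into {..<m} \<sigma> (fst c), snd c)"])
  qed
  then have "card {c \<in> copies J k. m \<le> the_inv_into {..<m} \<sigma> (fst c) + g}
      \<le> card ({m - g..<m} \<times> {..<k})"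
    by (meson card_image_le card_mono finite_SigmaI finite_atLeastLessThan finite_imageI
        finite_lessThan order_trans)
  also have "\<dots> \<le> g * k" by (simp add: card_cartesian_product; linarith)
  finally show ?thesis .
qed

lemma shifted_copies_subset:
  assumes "bij_betw \<sigma> {..<m} J"
  shows "(\<lambda>c. (\<sigma> (the_inv_into {..<m} \<sigma> (fst c) + g), snd c)) `
      {c \<in> copies J k. the_inv_into {..<m} \<sigma> (fst c) + g < m} \<subseteq> copies J k"
  using bij_betw_apply[OF assms] by (auto simp: copies_def)

(* Copy j of the item at sorted position q takes the place of copy j of the item at position q + g. *)
lemma valid_packing_shifted:
  assumes \<sigma>: "bij_betw \<sigma> {..<m} J" and mono: "\<forall>p q. p \<le> q \<and> q < m \<longrightarrow> d (\<sigma> p) \<le> d (\<sigma> q)"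
    and "0 < g" and d: "\<forall>i\<in>J. 0 \<le> d i" and h: "valid_packing S d (copies J k) h"
  shows "valid_packing S (rounded_size d \<sigma> m g)
      {c \<in> copies J k. the_inv_into {..<m} \<sigma> (fst c) + g < m}
      (h \<circ> (\<lambda>c. (\<sigma> (the_inv_into {..<m} \<sigma> (fst c) + g), snd c)))"
proof -
  let ?\<tau> = "the_inv_into {..<m} \<sigma>"
  let ?\<phi> = "\<lambda>c. (\<sigma> (?\<tau> (fst c) + g), snd c)"
  let ?A = "{c \<in> copies J k. ?\<tau> (fst c) + g < m}"
  have J: "fst c \<in> J" if "c \<in> ?A" for c using that by (auto simp: copies_def)
  have "finite J" using \<sigma> bij_betw_finite by blast
  have "\<forall>c\<in>copies J k. 0 \<le> d (fst c)" using d by (auto simp: copies_def)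
  moreover have "inj_on ?\<phi> ?A"
  proof (rule inj_onI)
    fix c c' assume c: "c \<in> ?A" "c' \<in> ?A" "?\<phi> c = ?\<phi> c'"
    from c(3) have "\<sigma> (?\<tau> (fst c) + g) = \<sigma> (?\<tau> (fst c') + g)" by simp
    then have "?\<tau> (fst c) + g = ?\<tau> (fst c') + g"
      by (rule inj_onD[OF bij_betw_imp_inj_on[OF \<sigma>]]) (use c(1,2) in auto)
    then have "\<sigma> (?\<tau> (fst c)) = \<sigma> (?\<tau> (fst c'))" by simp
    then have "fst c = fst c'" using bij_betw_the_inv_into_lessThan(2)[OF \<sigma>] J c(1,2) by metis
    with c(3) show "c = c'" by (simp add: prod_eq_iff)
  qed
  moreover have "\<forall>c\<in>?A. rounded_size d \<sigma> m g (fst c) \<le> d (fst (?\<phi> c))"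
    using rounded_size_le_shifted[OF \<sigma> mono \<open>0 < g\<close>] J by auto
  ultimately show ?thesis
    by (intro valid_packing_reindex[OF h finite_copies[OF \<open>finite J\<close>] _ _ shifted_copies_subset[OF \<sigma>]])
      simp_all
qed

lemma OPT_rounded_le:
  assumes \<sigma>: "bij_betw \<sigma> {..<m} J" and mono: "\<forall>p q. p \<le> q \<and> q < m \<longrightarrow> d (\<sigma> p) \<le> d (\<sigma> q)"
    and "0 < g" and "0 \<le> S" and d: "\<forall>i\<in>J. 0 \<le> d i \<and> d i \<le> S"
  shows "OPT S (rounded_size d \<sigma> m g) J k \<le> OPT S d J k + g * k"
proof -
  let ?\<tau> = "the_inv_into {..<m} \<sigma>" and ?u = "rounded_size d \<sigma> m g" and ?A = "copies J k"
  define \<phi> :: "nat \<times> nat \<Rightarrow> nat \<times> nat" where "\<phi> = (\<lambda>c. (\<sigma> (?\<tau> (fst c) + g), snd c))"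
  define A\<^sub>l\<^sub>o\<^sub>w where "A\<^sub>l\<^sub>o\<^sub>w = {c \<in> ?A. ?\<tau> (fst c) + g < m}"
  define A\<^sub>h\<^sub>i\<^sub>g\<^sub>h where "A\<^sub>h\<^sub>i\<^sub>g\<^sub>h = {c \<in> ?A. m \<le> ?\<tau> (fst c) + g}"
  have "finite ?A" using \<sigma> bij_betw_finite finite_copies by blast
  have partition: "A\<^sub>l\<^sub>o\<^sub>w \<union> A\<^sub>h\<^sub>i\<^sub>g\<^sub>h = ?A" "A\<^sub>l\<^sub>o\<^sub>w \<inter> A\<^sub>h\<^sub>i\<^sub>g\<^sub>h = {}"
    unfolding A\<^sub>l\<^sub>o\<^sub>w_def A\<^sub>h\<^sub>i\<^sub>g\<^sub>h_def by auto
  have "\<exists>h. valid_packing S d ?A h" using exists_valid_packing \<open>0 \<le> S\<close> d by auto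
  then obtain h where h: "valid_packing S d ?A h" "num_bins h ?A = OPT S d J k"
    by (rule OPT_attained)
  have "valid_packing S ?u A\<^sub>l\<^sub>o\<^sub>w (h \<circ> \<phi>)"
    using valid_packing_shifted[OF \<sigma> mono \<open>0 < g\<close> _ h(1)] d unfolding A\<^sub>l\<^sub>o\<^sub>w_def \<phi>_def by simp
  moreover have "\<forall>c\<in>A\<^sub>h\<^sub>i\<^sub>g\<^sub>h. ?u (fst c) \<le> S"
    using rounded_size_le[OF \<sigma>] d by (auto simp: A\<^sub>h\<^sub>i\<^sub>g\<^sub>h_def copies_def)
  moreover have "finite A\<^sub>l\<^sub>o\<^sub>w" "finite A\<^sub>h\<^sub>i\<^sub>g\<^sub>h"
    using \<open>finite ?A\<close> unfolding A\<^sub>l\<^sub>o\<^sub>w_def A\<^sub>h\<^sub>i\<^sub>g\<^sub>h_def by simp_all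
  ultimately obtain f where f: "valid_packing S ?u (A\<^sub>l\<^sub>o\<^sub>w \<union> A\<^sub>h\<^sub>i\<^sub>g\<^sub>h) f"
      "num_bins f (A\<^sub>l\<^sub>o\<^sub>w \<union> A\<^sub>h\<^sub>i\<^sub>g\<^sub>h) \<le> num_bins (h \<circ> \<phi>) A\<^sub>l\<^sub>o\<^sub>w + card A\<^sub>h\<^sub>i\<^sub>g\<^sub>h"
    using valid_packing_add_singletons[OF _ _ _ partition(2) \<open>0 \<le> S\<close>] by blast
  have "(h \<circ> \<phi>) ` A\<^sub>l\<^sub>o\<^sub>w \<subseteq> h ` ?A"
    using shifted_copies_subset[OF \<sigma>, of g k] unfolding A\<^sub>l\<^sub>o\<^sub>w_def \<phi>_def by auto
  then have "num_bins (h \<circ> \<phi>) A\<^sub>l\<^sub>o\<^sub>w \<le> num_bins h ?A"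
    unfolding num_bins_def using \<open>finite ?A\<close> by (intro card_mono) auto
  moreover have "card A\<^sub>h\<^sub>i\<^sub>g\<^sub>h \<le> g * k"
    unfolding A\<^sub>h\<^sub>i\<^sub>g\<^sub>h_def by (rule card_last_groups[OF \<sigma>])
  moreover have "OPT S ?u J k \<le> num_bins f ?A" using f(1) unfolding partition(1) by (rule OPT_le)
  ultimately show ?thesis using f(2) h(2) unfolding partition(1) by linarith
qed

lemma linear_grouping_cost:
  assumes "0 \<le> \<epsilon>" "real k * real m * \<epsilon> \<le> y"
  shows "real (max 1 (nat \<lfloor>real m * \<epsilon>^2\<rfloor>) * k) \<le> real k + \<epsilon> * y"
proof -
  have "real (max 1 (nat \<lfloor>real m * \<epsilon>^2\<rfloor>)) \<le> 1 + real m * \<epsilon>^2"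
    using of_int_floor_le[of "real m * \<epsilon>^2"] by (simp add: max_def) linarith
  then have "real (max 1 (nat \<lfloor>real m * \<epsilon>^2\<rfloor>) * k) \<le> (1 + real m * \<epsilon>^2) * real k"
    by (simp add: mult_right_mono)
  also have "\<dots> = real k + \<epsilon> * (real k * real m * \<epsilon>)" by (simp add: algebra_simps power2_eq_square)
  also have "\<dots> \<le> real k + \<epsilon> * y" using assms by (simp add: mult_left_mono)
  finally show ?thesis .
qed

lemma OPT_linear_grouping_le:
  assumes "0 < S" "0 \<le> \<epsilon>" and X: "finite X" "\<forall>i\<in>X. 0 \<le> d i \<and> d i \<le> S"
    and J: "J \<subseteq> X" "\<forall>i\<in>J. \<epsilon> * S \<le> d i"
    and \<sigma>: "bij_betw \<sigma> {..<card J} J"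
    and mono: "\<forall>p q. p \<le> q \<and> q < card J \<longrightarrow> d (\<sigma> p) \<le> d (\<sigma> q)"
  shows "real (OPT S (rounded_size d \<sigma> (card J) (max 1 (nat \<lfloor>real (card J) * \<epsilon>^2\<rfloor>))) J k)
    \<le> (1 + \<epsilon>) * real (OPT S d X k) + real k"
proof -
  let ?g = "max 1 (nat \<lfloor>real (card J) * \<epsilon>^2\<rfloor>)" and ?OPT = "real (OPT S d X k)"
  let ?u = "rounded_size d \<sigma> (card J) ?g"
  have packable: "\<exists>h. valid_packing S d (copies X k) h"
    using exists_valid_packing \<open>0 < S\<close> X(2) by auto
  have "S * (real k * real (card J) * \<epsilon>) \<le> S * ?OPT"
    using card_mult_le_OPT[OF X(1) J(1) _ J(2) packable] X(2) by (simp add: algebra_simps)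
  then have group_cost: "real (?g * k) \<le> real k + \<epsilon> * ?OPT"
    using linear_grouping_cost \<open>0 < S\<close> \<open>0 \<le> \<epsilon>\<close> by simp
  have "OPT S ?u J k \<le> OPT S d J k + ?g * k"
    by (rule OPT_rounded_le[OF \<sigma> mono]) (use \<open>0 < S\<close> X(2) J(1) in auto)
  moreover have "OPT S d J k \<le> OPT S d X k"
    using OPT_mono[OF J(1) X(1) _ packable] X(2) by simp
  ultimately have "real (OPT S ?u J k) \<le> real (OPT S d X k + ?g * k)"
    by (intro of_nat_mono) linarith
  with group_cost show ?thesis
    unfolding of_nat_add distrib_right by linarith
qed

definition fits :: "real \<Rightarrow> (nat \<Rightarrow> real) \<Rightarrow> (nat \<times> nat \<Rightarrow> nat) \<Rightarrow> (nat \<times> nat) set \<Rightarrow> nat \<Rightarrow> nat \<Rightarrow> bool"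
  where "fits S w f A i b \<longleftrightarrow>
    b \<in> f ` A \<and> load w f A b + w i \<le> S \<and> (\<forall>c\<in>A. f c = b \<longrightarrow> fst c \<noteq> i)"

definition any_fit :: "real \<Rightarrow> (nat \<Rightarrow> real) \<Rightarrow> (nat \<times> nat) set \<Rightarrow> (nat \<times> nat) list \<Rightarrow> (nat \<times> nat \<Rightarrow> nat) \<Rightarrow> bool"
  where "any_fit S w A cs f \<longleftrightarrow> (\<forall>t < length cs.
    let B = A \<union> set (take t cs); i = fst (cs ! t)
    in if \<exists>b. fits S w f B i b then fits S w f B i (f (cs ! t)) else f (cs ! t) \<notin> f ` B)"

lemma any_fit_snocD:
  assumes "any_fit S w A (cs @ [c]) f"
  shows "any_fit S w A cs f"
    and "\<exists>b. fits S w f (A \<union> set cs) (fst c) b \<Longrightarrow> f c \<in> f ` (A \<union> set cs)"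
proof -
  show "any_fit S w A cs f"
    unfolding any_fit_def
  proof (intro allI impI)
    fix t assume t: "t < length cs"
    then have "take t (cs @ [c]) = take t cs" "(cs @ [c]) ! t = cs ! t"
      by (simp_all add: nth_append)
    with assms[unfolded any_fit_def, rule_format, of t] t
    show "let B = A \<union> set (take t cs); i = fst (cs ! t)
      in if \<exists>b. fits S w f B i b then fits S w f B i (f (cs ! t)) else f (cs ! t) \<notin> f ` B"
      by (simp only: length_append_singleton less_SucI)
  qed
  show "f c \<in> f ` (A \<union> set cs)" if "\<exists>b. fits S w f (A \<union> set cs) (fst c) b"
    using assms[unfolded any_fit_def, rule_format, of "length cs"] that
    by (simp add: Let_def fits_def)
qed

lemma card_bins_le_if_no_fit:
  assumes "finite A" "\<forall>c\<in>A. snd c < k" "(i, j) \<notin> A" "j < k" "\<not> (\<exists>b. fits S w f A i b)"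
  shows "card (f ` A) + 1 \<le> card {b \<in> f ` A. S < load w f A b + w i} + k"
proof -
  let ?H = "{b \<in> f ` A. S < load w f A b + w i}"
  let ?C = "{i} \<times> ({..<k} - {j})"
  have "f ` A \<subseteq> ?H \<union> f ` ?C"
  proof
    fix b assume "b \<in> f ` A"
    show "b \<in> ?H \<union> f ` ?C"
    proof (cases "b \<in> ?H")
      case False
      with \<open>b \<in> f ` A\<close> assms(5) obtain c where "c \<in> A" "f c = b" "fst c = i"
        unfolding fits_def by force
      with assms(2,3) have "c \<in> ?C" by (cases c) auto
      with \<open>f c = b\<close> show ?thesis by blast
    qed simp
  qed
  then have "card (f ` A) \<le> card (?H \<union> f ` ?C)"
    using assms(1) by (intro card_mono) auto
  also have "\<dots> \<le> card ?H + card ?C"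
    by (rule order_trans[OF card_Un_le add_left_mono[OF card_image_le]]) simp
  also have "card ?C = k - 1" using assms(4) by simp
  finally show ?thesis using assms(4) by linarith
qed

lemma card_heavy_bins_le:
  assumes "finite A" "\<forall>c\<in>A. 0 \<le> w (fst c)"
  shows "real (card {b \<in> f ` A. T \<le> load w f A b}) * T \<le> (\<Sum>c\<in>A. w (fst c))"
proof -
  let ?H = "{b \<in> f ` A. T \<le> load w f A b}"
  have "real (card ?H) * T \<le> (\<Sum>b\<in>?H. load w f A b)"
    by (rule sum_bounded_below) simp
  also have "\<dots> \<le> (\<Sum>b\<in>f ` A. load w f A b)"
    by (rule sum_mono2) (use assms load_nonneg in auto)
  also have "\<dots> = (\<Sum>c\<in>A. w (fst c))" using assms(1) by (rule sum_load)
  finally show ?thesis .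
qed

lemma any_fit_bins:
  assumes "any_fit S w A cs f" "finite A" "distinct cs" "A \<inter> set cs = {}"
    and "\<forall>c\<in>A \<union> set cs. snd c < k" and "\<forall>c\<in>A \<union> set cs. 0 \<le> w (fst c)"
    and "\<forall>c\<in>set cs. w (fst c) \<le> \<delta>" and "\<delta> \<le> S"
  shows "f ` (A \<union> set cs) = f ` A \<or>
    (real (card (f ` (A \<union> set cs))) - real k) * (S - \<delta>) \<le> (\<Sum>c\<in>A \<union> set cs. w (fst c))"
  using assms
proof (induction cs rule: rev_induct)
  case (snoc c cs)
  let ?B = "A \<union> set cs"
  have "finite ?B" "c \<notin> ?B" using snoc.prems(2-4) by auto
  have B': "A \<union> set (cs @ [c]) = insert c ?B" by simp
  have sum_le: "(\<Sum>c\<in>?B. w (fst c)) \<le> (\<Sum>c\<in>insert c ?B. w (fst c))"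
    using snoc.prems(6) \<open>finite ?B\<close> \<open>c \<notin> ?B\<close> by simp
  show ?case
  proof (cases "\<exists>b. fits S w f ?B (fst c) b")
    case True
    then have "f ` insert c ?B = f ` ?B" using any_fit_snocD(2)[OF snoc.prems(1)] by blast
    moreover have "f ` ?B = f ` A \<or>
        (real (card (f ` ?B)) - real k) * (S - \<delta>) \<le> (\<Sum>c\<in>?B. w (fst c))"
      using snoc.IH any_fit_snocD(1)[OF snoc.prems(1)] snoc.prems(2-8) by auto
    ultimately show ?thesis unfolding B' using sum_le by auto
  next
    case False
    let ?H = "{b \<in> f ` ?B. S - \<delta> \<le> load w f ?B b}"
    have "card (f ` insert c ?B) \<le> card (f ` ?B) + 1"
      by (simp add: card_insert_le_m1)
    also have "\<dots> \<le> card {b \<in> f ` ?B. S < load w f ?B b + w (fst c)} + k"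
      using card_bins_le_if_no_fit[of ?B k "fst c" "snd c"] False \<open>finite ?B\<close> \<open>c \<notin> ?B\<close> snoc.prems(5)
      by simp
    also have "card {b \<in> f ` ?B. S < load w f ?B b + w (fst c)} \<le> card ?H"
      using snoc.prems(7) \<open>finite ?B\<close> by (intro card_mono) auto
    finally have "real (card (f ` insert c ?B)) - real k \<le> real (card ?H)" by simp
    then have "(real (card (f ` insert c ?B)) - real k) * (S - \<delta>) \<le> real (card ?H) * (S - \<delta>)"
      using snoc.prems(8) by (simp add: mult_right_mono)
    also have "\<dots> \<le> (\<Sum>c\<in>?B. w (fst c))"
      using card_heavy_bins_le \<open>finite ?B\<close> snoc.prems(6) by simp
    finally show ?thesis unfolding B' using sum_le by simp
  qed
qed simp

lemma any_fit_copies_bins: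
  assumes "any_fit S w (copies J k) (copy_order xs k) f" "finite J" "distinct xs" "J \<inter> set xs = {}"
    and "\<forall>i\<in>J \<union> set xs. 0 \<le> w i" "\<forall>i\<in>set xs. w i \<le> \<delta>" "\<delta> \<le> S"
  shows "f ` copies (J \<union> set xs) k = f ` copies J k \<or>
    (real (num_bins f (copies (J \<union> set xs) k)) - real k) * (S - \<delta>)
      \<le> real k * (\<Sum>i\<in>J \<union> set xs. w i)"
proof -
  let ?cs = "copy_order xs k"
  have D: "copies J k \<union> set ?cs = copies (J \<union> set xs) k"
    by (auto simp: set_copy_order copies_def)
  have "copies J k \<inter> set ?cs = {}" using assms(4) by (auto simp: set_copy_order copies_def)
  moreover have "\<forall>c\<in>copies J k \<union> set ?cs. snd c < k" unfolding D by (auto simp: copies_def)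
  moreover have "\<forall>c\<in>copies J k \<union> set ?cs. 0 \<le> w (fst c)"
    unfolding D using assms(5) by (auto simp: copies_def)
  moreover have "\<forall>c\<in>set ?cs. w (fst c) \<le> \<delta>" using assms(6) by (auto simp: set_copy_order copies_def)
  ultimately show ?thesis
    using any_fit_bins[OF assms(1) finite_copies[OF assms(2)] distinct_copy_order[OF assms(3)]] assms(7)
    unfolding D num_bins_def sum_copies by blast
qed

lemma le_one_plus_twice_mult:
  fixes x y \<epsilon> S :: real
  assumes "0 < S" "0 \<le> \<epsilon>" "\<epsilon> \<le> 1/2" "0 \<le> y" and le: "x * (S - \<epsilon> * S) \<le> S * y"
  shows "x \<le> (1 + 2 * \<epsilon>) * y"
proof (cases "x \<le> 0")
  case True
  then show ?thesis using assms by (smt (verit) mult_nonneg_nonneg)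
next
  case False
  have "S * (x * (1 - \<epsilon>)) \<le> S * y" using le by (simp add: algebra_simps)
  then have "x * (1 - \<epsilon>) \<le> y" using \<open>0 < S\<close> by simp
  have "1 \<le> (1 + 2 * \<epsilon>) * (1 - \<epsilon>)"
    using assms(2,3) mult_nonneg_nonneg[of \<epsilon> "1 - 2 * \<epsilon>"] by (simp add: algebra_simps)
  then have "x \<le> (1 + 2 * \<epsilon>) * (x * (1 - \<epsilon>))"
    using False mult_left_mono[of 1 "(1 + 2 * \<epsilon>) * (1 - \<epsilon>)" x] by (simp add: algebra_simps)
  also have "\<dots> \<le> (1 + 2 * \<epsilon>) * y"
    using \<open>x * (1 - \<epsilon>) \<le> y\<close> assms(2,3) by (intro mult_left_mono) auto
  finally show ?thesis .
qed

theorem theorem4: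
  fixes S \<epsilon> :: real and n k :: nat and d :: "nat \<Rightarrow> real"
    and \<sigma> :: "nat \<Rightarrow> nat" and fJ f :: "nat \<times> nat \<Rightarrow> nat" and xs :: "nat list"
  assumes S_pos: "S > 0"
    and sizes: "\<forall>i<n. 0 < d i \<and> d i \<le> S"
    and k: "k \<ge> 1"
    and eps: "0 < \<epsilon>" "\<epsilon> \<le> 1/2"
  \<comment> \<open>(1) small and large items\<close>
    and I_def: "I = {i. i < n \<and> d i \<le> \<epsilon> * S}"
    and J_def: "J = {i. i < n \<and> d i > \<epsilon> * S}"
  \<comment> \<open>(2) sorting and linear grouping\<close>
    and m_def: "m = card J"
    and sorted: "bij_betw \<sigma> {..<m} J"
    and mono: "\<forall>p q. p \<le> q \<and> q < m \<longrightarrow> d (\<sigma> p) \<le> d (\<sigma> q)"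
    and g_def: "g = max 1 (nat \<lfloor>real m * \<epsilon>^2\<rfloor>)"
    and u_def: "u = rounded_size d \<sigma> m g"
  \<comment> \<open>(3) an optimal k-times packing of the rounded instance U\<close>
    and fJ_valid: "valid_packing S u (copies J k) fJ"
    and fJ_opt: "num_bins fJ (copies J k) = OPT S u J k"
  \<comment> \<open>(4) the final packing keeps the bins of the copies of large items\<close>
    and f_J: "\<forall>c\<in>copies J k. f c = fJ c"
  \<comment> \<open>(5) insertion of copies of small items one at a time\<close>
    and xs: "distinct xs" "set xs = I"
    and cs_def: "cs = copy_order xs k"
    and insert_step: "\<forall>t < length cs.
       (let A = copies J k \<union> set (take t cs); c = cs ! t; i = fst c;
            fits = (\<lambda>b. b \<in> f ` A \<and> load d f A b + d i \<le> S \<and>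
                         (\<forall>c'\<in>A. f c' = b \<longrightarrow> fst c' \<noteq> i))
        in (if (\<exists>b. fits b) then fits (f c) else f c \<notin> f ` A))"
  shows "real (num_bins f (copies {..<n} k))
           \<le> (1 + 2 * \<epsilon>) * real (OPT S d {..<n} k) + real k"
proof -
  let ?D = "copies {..<n} k" and ?OPT = "real (OPT S d {..<n} k)"
  have d: "\<forall>i\<in>{..<n}. 0 \<le> d i \<and> d i \<le> S" using sizes by auto
  have J_sub: "J \<subseteq> {..<n}" using J_def by auto
  have "\<exists>h. valid_packing S d ?D h" using exists_valid_packing S_pos d by auto
  then have total: "real k * (\<Sum>i<n. d i) \<le> S * ?OPT" by (rule sum_le_OPT[OF finite_lessThan])
  have "\<forall>i\<in>J. \<epsilon> * S \<le> d i" using J_def by auto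
  from OPT_linear_grouping_le[where k = k, OF S_pos less_imp_le[OF eps(1)] finite_lessThan d J_sub
      this sorted[unfolded m_def] mono[unfolded m_def]]
  have rounded: "real (OPT S u J k) \<le> (1 + \<epsilon>) * ?OPT + real k"
    unfolding u_def g_def m_def .
  have "any_fit S d (copies J k) (copy_order xs k) f"
    using insert_step unfolding cs_def any_fit_def fits_def Let_def by simp
  moreover have "finite J" using J_sub by (rule finite_subset) simp
  moreover have D: "J \<union> set xs = {..<n}" and "J \<inter> set xs = {}"
    unfolding xs(2) using I_def J_def by auto
  moreover have "\<forall>i\<in>J \<union> set xs. 0 \<le> d i" unfolding D using d by simp
  moreover have "\<forall>i\<in>set xs. d i \<le> \<epsilon> * S" using xs(2) I_def by simp
  moreover have "\<epsilon> * S \<le> S" using eps S_pos by simp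
  ultimately have "f ` copies (J \<union> set xs) k = f ` copies J k \<or>
      (real (num_bins f (copies (J \<union> set xs) k)) - real k) * (S - \<epsilon> * S)
        \<le> real k * (\<Sum>i\<in>J \<union> set xs. d i)"
    by (intro any_fit_copies_bins[OF _ _ xs(1)])
  then show ?thesis
    unfolding D
  proof
    assume "f ` ?D = f ` copies J k"
    then have "num_bins f ?D = OPT S u J k"
      using f_J fJ_opt unfolding num_bins_def by (simp cong: image_cong)
    moreover have "(1 + \<epsilon>) * ?OPT \<le> (1 + 2 * \<epsilon>) * ?OPT" using eps by (intro mult_right_mono) auto
    ultimately show ?thesis using rounded by linarith
  next
    assume "(real (num_bins f ?D) - real k) * (S - \<epsilon> * S) \<le> real k * (\<Sum>i<n. d i)"
    then have "(real (num_bins f ?D) - real k) * (S - \<epsilon> * S) \<le> S * ?OPT"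
      using total by (rule order_trans)
    then have "real (num_bins f ?D) - real k \<le> (1 + 2 * \<epsilon>) * ?OPT"
      by (rule le_one_plus_twice_mult[OF S_pos less_imp_le[OF eps(1)] eps(2) of_nat_0_le_iff])
    then show ?thesis by simp
  qed
qed

end
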